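(* Let $n\ge 1$, $s\ge 1$, and let $A,B_1,\dots,B_s$ be real symmetric $n\times n$ matrices. Let $\mathcal{L}$ be the real Lie algebra generated by $A,B_1,\dots,B_s$, and let $\hat{\mathcal{L}}$ be the smallest ideal of $\mathcal{L}$ containing $B_1,\dots,B_s$. If $\mathcal{L}=gl(n,\mathbb{R})$ and $\operatorname{tr} B_k\neq 0$ for some $k\in\{1,\dots,s\}$, then $\hat{\mathcal{L}}=gl(n,\mathbb{R})$.
   Context: For matrices $A_1,\dots,A_k\in\mathbb{C}^{n\times n}$, the real Lie algebra generated by them is the smallest real vector space of matrices containing $A_1,\dots,A_k$ and closed under the commutator $[X,Y]=XY-YX$. $gl(n,\mathbb{R})$ denotes the Lie algebra of all real $n\times n$ matrices. *)

theory Defs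
  imports "HOL-Analysis.Analysis"
begin

definition mcomm :: "real^'n^'n \<Rightarrow> real^'n^'n \<Rightarrow> real^'n^'n" where
  "mcomm X Y = X ** Y - Y ** X"

definition lie_generated :: "(real^'n^'n) set \<Rightarrow> (real^'n^'n) set" where
  "lie_generated S = \<Inter>{L. S \<subseteq> L \<and> subspace L \<and> (\<forall>X\<in>L. \<forall>Y\<in>L. mcomm X Y \<in> L)}"

definition lie_ideal_generated :: "(real^'n^'n) set \<Rightarrow> (real^'n^'n) set \<Rightarrow> (real^'n^'n) set" where
  "lie_ideal_generated L T = \<Inter>{I. T \<subseteq> I \<and> subspace I \<and> I \<subseteq> L \<and> (\<forall>X\<in>L. \<forall>Y\<in>I. mcomm X Y \<in> I)}"

end

theory Submission
  imports Defs
begin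

text \<open>Work in the ideal \<open>J\<close> of \<open>gl(n,\<real>)\<close>
  generated by the \<open>B\<^sub>k\<close>. If some \<open>B\<^sub>k\<close> is not scalar, bracketing it with matrix units
  produces an off-diagonal unit \<open>E\<^sub>a\<^sub>b\<close> in \<open>J\<close>, and then every off-diagonal unit. A matrix
  orthogonal to \<open>J\<close> then has a transpose commuting with all of them, so it is scalar,
  and orthogonality to a \<open>B\<^sub>k\<close> of nonzero trace forces it to vanish; hence \<open>J = gl(n,\<real>)\<close>.
  If all \<open>B\<^sub>k\<close> are scalar, the generators commute pairwise and generate an abelian
  algebra, which is not \<open>gl(n,\<real>)\<close> once \<open>n \<ge> 2\<close>; for \<open>n = 1\<close> there are no
  off-diagonal units and the first argument applies directly.\<close>

lemma matrix_add_rdistrib: "(A + B) ** C = A ** C + B ** C"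
  by (vector matrix_matrix_mult_def sum.distrib[symmetric] field_simps)

lemma bilinear_mcomm: "bilinear (mcomm :: real^'n^'n \<Rightarrow> _)"
  by (simp add: bilinear_def linear_iff mcomm_def matrix_add_ldistrib matrix_add_rdistrib
      matrix_scalar_ac scalar_matrix_assoc[symmetric] algebra_simps)

lemma lie_generated_abelian:
  assumes "\<forall>X\<in>S. \<forall>Y\<in>S. mcomm X Y = 0"
    and "X \<in> lie_generated S" and "Y \<in> lie_generated S"
  shows "mcomm X Y = 0"
proof -
  have commute_in_span: "mcomm X Y = 0" if "X \<in> span S" "Y \<in> span S" for X Y
    using bilinear_eq[OF bilinear_mcomm, of "\<lambda>_ _. 0" "span S" S "span S" S] that assms(1)
    by (simp add: bilinear_def real_vector.linear_zero)
  have "lie_generated S \<subseteq> span S"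
    unfolding lie_generated_def using commute_in_span by (auto simp: span_superset span_zero)
  with assms(2,3) show ?thesis by (auto intro: commute_in_span)
qed

definition matrix_unit :: "'n \<Rightarrow> 'n \<Rightarrow> real^'n^'n" where
  "matrix_unit i j = (\<chi> p q. if p = i \<and> q = j then 1 else 0)"

lemma matrix_unit_nth [simp]: "matrix_unit i j $ p $ q = (if p = i \<and> q = j then 1 else 0)"
  by (simp add: matrix_unit_def)

lemma matrix_unit_mult_left [simp]:
  "(matrix_unit i j ** X) $ p $ q = (if p = i then X $ j $ q else 0)"
  by (simp add: matrix_matrix_mult_def if_distrib if_distribR cong: if_cong)

lemma matrix_unit_mult_right [simp]:
  "(X ** matrix_unit i j) $ p $ q = (if q = j then X $ p $ i else 0)"
  by (simp add: matrix_matrix_mult_def if_distrib if_distribR cong: if_cong)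

lemma mcomm_matrix_unit_left_nth [simp]:
  "mcomm (matrix_unit i j) X $ p $ q = (if p = i then X$j$q else 0) - (if q = j then X$p$i else 0)"
  by (simp add: mcomm_def)

lemma mcomm_matrix_units_nonzero:
  assumes "i \<noteq> j"
  shows "mcomm (matrix_unit i j) (matrix_unit j i) \<noteq> 0"
proof
  assume "mcomm (matrix_unit i j) (matrix_unit j i) = 0"
  then have "mcomm (matrix_unit i j) (matrix_unit j i) $ i $ i = 0" by simp
  with assms show False by simp
qed

lemma inner_mcomm_matrix_unit:
  "Z \<bullet> mcomm (matrix_unit p q) X = (X ** transpose Z - transpose Z ** X) $ q $ p"
proof -
  have "Z \<bullet> mcomm (matrix_unit p q) X
      = (\<Sum>i\<in>UNIV. \<Sum>j\<in>UNIV. Z$i$j * ((if i = p then X$q$j else 0) - (if j = q then X$i$p else 0)))"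
    by (simp add: inner_vec_def)
  also have "\<dots> = (\<Sum>i\<in>UNIV. (if i = p then (\<Sum>j\<in>UNIV. Z$i$j * X$q$j) else 0) - Z$i$q * X$i$p)"
    by (rule sum.cong) (auto simp: right_diff_distrib sum_subtractf if_distrib[of "\<lambda>x. _ * x"] cong: if_cong)
  also have "\<dots> = (\<Sum>j\<in>UNIV. Z$p$j * X$q$j) - (\<Sum>i\<in>UNIV. Z$i$q * X$i$p)"
    by (simp add: sum_subtractf)
  finally show ?thesis
    by (simp add: matrix_matrix_mult_def transpose_def mult.commute)
qed

lemma inner_mat_1: "mat 1 \<bullet> B = trace (B :: real^'n^'n)"
  by (simp add: inner_vec_def mat_def trace_def sum_distrib_left if_distrib if_distribR cong: if_cong)

lemma scalar_matrix_if_entries: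
  fixes M :: "real^'n^'n"
  assumes "\<And>p q. p \<noteq> q \<Longrightarrow> M $ p $ q = 0 \<and> M $ p $ p = M $ q $ q"
  shows "M = M $ a $ a *\<^sub>R mat 1"
  using assms by (auto simp: vec_eq_iff mat_def) metis

lemma scalar_if_commutes_with_off_diagonal_units:
  fixes W :: "real^'n^'n"
  assumes "\<And>i j. i \<noteq> j \<Longrightarrow> matrix_unit i j ** W = W ** matrix_unit i j"
  shows "W = W $ a $ a *\<^sub>R mat 1"
proof (rule scalar_matrix_if_entries)
  fix p q :: 'n
  assume "p \<noteq> q"
  from arg_cong[OF assms[OF this], of "\<lambda>M. M $ p $ q"] arg_cong[OF assms[OF this], of "\<lambda>M. M $ p $ p"]
    arg_cong[OF assms[OF \<open>p \<noteq> q\<close>[symmetric]], of "\<lambda>M. M $ q $ q"] \<open>p \<noteq> q\<close>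
  show "W $ p $ q = 0 \<and> W $ p $ p = W $ q $ q" by auto
qed

definition gl_ideal :: "(real^'n^'n) set \<Rightarrow> bool" where
  "gl_ideal J \<longleftrightarrow> subspace J \<and> (\<forall>X Y. Y \<in> J \<longrightarrow> mcomm X Y \<in> J)"

lemma gl_ideal_lie_ideal_generated: "gl_ideal (lie_ideal_generated UNIV T)"
  unfolding gl_ideal_def lie_ideal_generated_def by (auto intro: subspace_Inter)

lemma gl_ideal_matrix_unit_of_entry:
  assumes J: "gl_ideal J" and "M \<in> J" and "a \<noteq> b" and "M $ a $ b \<noteq> 0"
  shows "matrix_unit a b \<in> J"
proof -
  have sub: "subspace J" and cl: "\<And>X Y. Y \<in> J \<Longrightarrow> mcomm X Y \<in> J"
    using J by (auto simp: gl_ideal_def)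
  define P where "P = mcomm (matrix_unit a a) (mcomm (matrix_unit b b) M)"
  define R where "R = mcomm (matrix_unit a a) P"
  \<comment> \<open>\<open>P = - M\<^sub>a\<^sub>b E\<^sub>a\<^sub>b - M\<^sub>b\<^sub>a E\<^sub>b\<^sub>a\<close> and \<open>R = - M\<^sub>a\<^sub>b E\<^sub>a\<^sub>b + M\<^sub>b\<^sub>a E\<^sub>b\<^sub>a\<close>\<close>
  have "P \<in> J" "R \<in> J" unfolding P_def R_def using cl \<open>M \<in> J\<close> by blast+
  moreover have "matrix_unit a b = (- 1 / (2 * M $ a $ b)) *\<^sub>R (P + R)"
    using assms(3,4) by (auto simp: vec_eq_iff P_def R_def field_simps)
  ultimately show ?thesis by (simp only: subspace_add subspace_scale sub)
qed

lemma gl_ideal_matrix_unit_transfer: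
  assumes J: "gl_ideal J" and "matrix_unit a b \<in> J" and "a \<noteq> b" and "i \<noteq> j"
  shows "matrix_unit i j \<in> J"
proof -
  define P where "P = mcomm (matrix_unit i a) (mcomm (matrix_unit b j) (matrix_unit a b))"
  have "P \<in> J" unfolding P_def using J assms(2) by (simp add: gl_ideal_def)
  moreover have "matrix_unit i j = (- (if i = b \<and> j = a then 1/2 else 1)) *\<^sub>R P"
    using assms(3,4) by (auto simp: vec_eq_iff P_def)
  ultimately show ?thesis using J by (simp only: gl_ideal_def subspace_scale)
qed

lemma gl_ideal_off_diagonal_units:
  assumes J: "gl_ideal J" and "M \<in> J" and "\<not> (\<exists>c. M = c *\<^sub>R mat 1)" and "i \<noteq> j"
  shows "matrix_unit i j \<in> J"
proof -
  obtain a b where "a \<noteq> b" and ab: "M $ a $ b \<noteq> 0 \<or> M $ a $ a \<noteq> M $ b $ b"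
    using scalar_matrix_if_entries assms(3) by blast
  then obtain N where "N \<in> J" "N $ a $ b \<noteq> 0"
  proof (cases "M $ a $ b = 0")
    case True
    then have "mcomm (matrix_unit a b) M $ a $ b \<noteq> 0" using \<open>a \<noteq> b\<close> ab by simp
    moreover have "mcomm (matrix_unit a b) M \<in> J" using assms(2) J by (simp add: gl_ideal_def)
    ultimately show ?thesis using that by blast
  qed (use that assms(2) in blast)
  then have "matrix_unit a b \<in> J"
    using gl_ideal_matrix_unit_of_entry[OF J] \<open>a \<noteq> b\<close> by blast
  then show ?thesis using gl_ideal_matrix_unit_transfer[OF J] \<open>a \<noteq> b\<close> \<open>i \<noteq> j\<close> by blast
qed

lemma gl_ideal_eq_UNIV:
  assumes J: "gl_ideal J" and units: "\<And>i j. i \<noteq> j \<Longrightarrow> matrix_unit i j \<in> J"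
    and "B \<in> J" and "trace B \<noteq> 0"
  shows "J = UNIV"
proof -
  have sub: "subspace J" using J by (simp add: gl_ideal_def)
  have "Z = 0" if Z: "Z \<in> J\<^sup>\<bottom>" for Z
  proof -
    have perp: "Z \<bullet> X = 0" if "X \<in> J" for X
      using Z that by (simp add: orthogonal_comp_def orthogonal_def inner_commute)
    have "X ** transpose Z = transpose Z ** X" if "X \<in> J" for X
    proof -
      have "(X ** transpose Z - transpose Z ** X) $ q $ p = 0" for p q
        using perp[of "mcomm (matrix_unit p q) X"] J that
        by (simp add: gl_ideal_def inner_mcomm_matrix_unit)
      then show ?thesis by (simp add: vec_eq_iff)
    qed
    then obtain c where c: "transpose Z = c *\<^sub>R mat 1"
      using scalar_if_commutes_with_off_diagonal_units units by metis
    then have "Z = c *\<^sub>R mat 1"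
      by (metis transpose_transpose transpose_mat transpose_scalar)
    moreover have "c * trace B = 0"
      using perp[OF \<open>B \<in> J\<close>] by (simp add: \<open>Z = c *\<^sub>R mat 1\<close> inner_mat_1)
    ultimately show "Z = 0" using \<open>trace B \<noteq> 0\<close> by simp
  qed
  then have "J\<^sup>\<bottom> = {0}" using sub by (auto simp: subspace_orthogonal_comp subspace_0)
  then show ?thesis by (metis orthogonal_comp_self[OF sub] orthogonal_comp_null)
qed

theorem lemma2p2:
  fixes A :: "real^'n^'n" and B :: "nat \<Rightarrow> real^'n^'n" and s :: nat
  assumes "s \<ge> 1"
    and "transpose A = A"
    and "\<forall>k\<in>{1..s}. transpose (B k) = B k"
    and "lie_generated (insert A (B ` {1..s})) = UNIV"
    and "\<exists>k\<in>{1..s}. trace (B k) \<noteq> 0"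
  shows "lie_ideal_generated (lie_generated (insert A (B ` {1..s}))) (B ` {1..s}) = UNIV"
proof -
  define J where "J = lie_ideal_generated UNIV (B ` {1..s})"
  have J: "gl_ideal J" unfolding J_def by (rule gl_ideal_lie_ideal_generated)
  have B_in_J: "B k \<in> J" if "k \<in> {1..s}" for k
    using that unfolding J_def lie_ideal_generated_def by blast
  have "matrix_unit i j \<in> J" if "i \<noteq> j" for i j
  proof (cases "\<exists>k\<in>{1..s}. \<not> (\<exists>c. B k = c *\<^sub>R mat 1)")
    case True
    then show ?thesis using gl_ideal_off_diagonal_units[OF J] B_in_J \<open>i \<noteq> j\<close> by blast
  next
    case False
    then have "\<forall>X\<in>insert A (B ` {1..s}). \<forall>Y\<in>insert A (B ` {1..s}). mcomm X Y = 0"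
      by (auto simp: mcomm_def matrix_scalar_ac scalar_matrix_assoc[symmetric])
    then have "mcomm (matrix_unit i j) (matrix_unit j i) = 0"
      using lie_generated_abelian assms(4) by blast
    with mcomm_matrix_units_nonzero[OF \<open>i \<noteq> j\<close>] show ?thesis by contradiction
  qed
  then have "J = UNIV"
    using gl_ideal_eq_UNIV[OF J] B_in_J assms(5) by blast
  then show ?thesis using assms(4) by (simp add: J_def)
qed

end
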